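(* Let $q$ be a prime power, $e\ge 2$, $r$ a positive integer, let $\xi$ be a primitive element of $\mathbb{F}_{q^e}^*$, and for integers $m$ let $f_m(x)=x^r(x^{q-1}+\xi^m)\in\mathbb{F}_{q^e}[x]$. If $f_j(x)$ does not permute $\mathbb{F}_{q^e}$ for every $0\le j<q-1$, then $f_m(x)$ does not permute $\mathbb{F}_{q^e}$ for every $0\le m<q^e-1$. *)

theory Defs
  imports "HOL-Computational_Algebra.Polynomial" "HOL-Number_Theory.Prime_Powers" "HOL-Library.Cardinality"
begin

definition permutes_field :: "'a::{finite,field} poly \<Rightarrow> bool" where
  "permutes_field p \<longleftrightarrow> bij (poly p)"

definition primitive_element :: "'a::{finite,field} \<Rightarrow> bool" where
  "primitive_element \<xi> \<longleftrightarrow> \<xi> \<noteq> 0 \<and> (\<forall>y. y \<noteq> 0 \<longrightarrow> (\<exists>k::nat. y = \<xi> ^ k))"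

definition fpoly :: "nat \<Rightarrow> nat \<Rightarrow> 'a::{finite,field} \<Rightarrow> nat \<Rightarrow> 'a poly" where
  "fpoly q r \<xi> m = monom 1 r * (monom 1 (q - 1) + [:\<xi> ^ m:])"

end

theory Submission
  imports Defs
begin

text \<open>Write \<open>m = k (q - 1) + j\<close> with \<open>j < q - 1\<close> and put \<open>a = \<xi>\<^sup>k\<close>.  Then
  \<open>f\<^sub>m(a x) = a^(r + q - 1) f\<^sub>j(x)\<close>, so \<open>f\<^sub>m\<close> and \<open>f\<^sub>j\<close> differ by invertible linear
  changes of variable and value, and one permutes the field iff the other does.\<close>

lemma poly_fpoly: "poly (fpoly q r \<xi> m) x = x ^ r * (x ^ (q - 1) + \<xi> ^ m)"
  by (simp add: fpoly_def poly_monom)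

lemma permutes_field_iff_inj: "permutes_field p \<longleftrightarrow> inj (poly p)"
  unfolding permutes_field_def bij_def using finite_UNIV_inj_surj[of "poly p"] by auto

lemma permutes_field_rescale:
  fixes p p' :: "'a::{finite,field} poly"
  assumes "a \<noteq> 0" and "c \<noteq> 0" and "\<And>x. poly p (a * x) = c * poly p' x"
  shows "permutes_field p \<longleftrightarrow> permutes_field p'"
proof -
  have "poly p' = (\<lambda>y. y / c) \<circ> poly p \<circ> (\<lambda>x. a * x)"
    using assms by (auto simp: fun_eq_iff)
  moreover have "poly p = (\<lambda>y. c * y) \<circ> poly p' \<circ> (\<lambda>x. x / a)"
    using assms(1) assms(3)[of "_ / a"] by (simp add: fun_eq_iff)
  moreover have "inj (\<lambda>y. y / c)" "inj (\<lambda>x. a * x)" "inj (\<lambda>y. c * y)" "inj (\<lambda>x. x / a)"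
    using assms by (auto intro: injI)
  ultimately show ?thesis
    unfolding permutes_field_iff_inj by (metis inj_compose inj_on_imageI2 inj_on_imageI)
qed

lemma poly_fpoly_rescale:
  assumes "\<xi> ^ m = a ^ (q - 1) * \<xi> ^ j"
  shows "poly (fpoly q r \<xi> m) (a * x) = a ^ (r + (q - 1)) * poly (fpoly q r \<xi> j) x"
  by (simp add: poly_fpoly assms power_add power_mult_distrib algebra_simps)

lemma permutes_field_fpoly_mod:
  assumes "\<xi> \<noteq> 0"
  shows "permutes_field (fpoly q r \<xi> m) \<longleftrightarrow> permutes_field (fpoly q r \<xi> (m mod (q - 1)))"
proof (rule permutes_field_rescale[OF _ _ poly_fpoly_rescale])
  let ?k = "m div (q - 1)"
  have "\<xi> ^ m = \<xi> ^ (?k * (q - 1) + m mod (q - 1))"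
    by (metis div_mult_mod_eq)
  then show "\<xi> ^ m = (\<xi> ^ ?k) ^ (q - 1) * \<xi> ^ (m mod (q - 1))"
    by (simp only: power_add power_mult)
  show "\<xi> ^ ?k \<noteq> 0" "(\<xi> ^ ?k) ^ (r + (q - 1)) \<noteq> 0"
    using assms by simp_all
qed

theorem proposition5p5:
  fixes \<xi> :: "'a::{finite,field}" and q e r :: nat
  assumes "primepow q"
    and "e \<ge> 2"
    and "r > 0"
    and "CARD('a) = q ^ e"
    and "primitive_element \<xi>"
    and "\<forall>j < q - 1. \<not> permutes_field (fpoly q r \<xi> j)"
  shows "\<forall>m < q ^ e - 1. \<not> permutes_field (fpoly q r \<xi> m)"
proof (intro allI impI)
  fix m
  have "q > 1" using assms(1) primepow_gt_Suc_0 by auto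
  then have "m mod (q - 1) < q - 1" by simp
  moreover have "\<xi> \<noteq> 0" using assms(5) by (simp add: primitive_element_def)
  ultimately show "\<not> permutes_field (fpoly q r \<xi> m)"
    using assms(6) permutes_field_fpoly_mod by blast
qed

end
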